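(* Let $q$ be a prime power and $n\ge 1$ an integer. For every integer $k$ with $1\le k< n(q-1)$ we have $\dim(C_{n,k}^q)<\dim(C_{n,k+1}^q)$.
   Context: For a prime power $q$ and integers $n\ge 1$, $k\ge 0$, the projective Reed-Muller code $C_{n,k}^q\subseteq \mathbb{F}_q^N$, $N=\frac{q^{n+1}-1}{q-1}$, is defined as follows. For each point of $\mathbb{P}^n(\mathbb{F}_q)$ choose the affine representative $(p_0,\dots,p_n)\in\mathbb{F}_q^{n+1}\setminus\{0\}$ whose left-most nonzero coordinate equals $1$, and fix an ordering $P_1',\dots,P_N'$ of these representatives. Then $C_{n,k}^q=\{(F(P_1'),\dots,F(P_N')) : F\in \mathbb{F}_q[x_0,\dots,x_n]_k\}$, where $\mathbb{F}_q[x_0,\dots,x_n]_k$ is the space of homogeneous polynomials of degree $k$ together with $0$ (so $C_{n,0}^q$ is spanned by the all-ones vector $\mathbf{1}$). *)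

theory Defs
  imports Complex_Main "HOL-Library.Function_Algebras"
begin

text \<open>Points of P^n(F_q): affine representatives (p_0,...,p_n) in F_q^(n+1), encoded as
  functions nat => 'a vanishing outside {0..n}, whose left-most nonzero coordinate is 1.\<close>
definition proj_points :: "nat \<Rightarrow> (nat \<Rightarrow> 'a::field) set" where
  "proj_points n = {p. (\<forall>i>n. p i = 0) \<and> (\<exists>j\<le>n. p j = 1 \<and> (\<forall>i<j. p i = 0))}"

definition monomials_deg :: "nat \<Rightarrow> nat \<Rightarrow> (nat \<Rightarrow> nat) set" where
  "monomials_deg n k = {e. (\<forall>i>n. e i = 0) \<and> (\<Sum>i\<le>n. e i) = k}"

definition hom_poly_eval :: "nat \<Rightarrow> nat \<Rightarrow> ((nat \<Rightarrow> nat) \<Rightarrow> 'a::field) \<Rightarrow> (nat \<Rightarrow> 'a) \<Rightarrow> 'a" where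
  "hom_poly_eval n k c p = (\<Sum>e\<in>monomials_deg n k. c e * (\<Prod>i\<le>n. p i ^ e i))"

text \<open>Projective Reed-Muller code C_{n,k}^q, q = CARD('a): the set of evaluation vectors,
  indexed by the points of P^n (zero outside the index set).\<close>
definition proj_RM_code :: "nat \<Rightarrow> nat \<Rightarrow> ((nat \<Rightarrow> 'a::{finite,field}) \<Rightarrow> 'a) set" where
  "proj_RM_code n k =
     {(\<lambda>p. if p \<in> proj_points n then hom_poly_eval n k c p else 0) | c. True}"

definition code_dim :: "((nat \<Rightarrow> 'a::{finite,field}) \<Rightarrow> 'a) set \<Rightarrow> nat" where
  "code_dim C = vector_space.dim (\<lambda>(a::'a) v. (\<lambda>x. a * v x)) C"

end

theory Submission
  imports Defs "HOL-Computational_Algebra.Polynomial" "HOL-Library.Cardinality"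
begin

text \<open>Let C_j(k) be the code obtained by evaluating the forms of degree k only at the points
  whose first j coordinates vanish, so that C_0(k) is the projective Reed-Muller code and
  C_{n+1}(k) = 0. Multiplication by x_j maps C_j(k) into the words of C_j(k+1) vanishing at the
  points with x_j = 0; its kernel consists of words supported on those points, so it lies in
  C_{j+1}(k). Counting along these two exact sequences gives |C_j(k)| \<le> |C_j(k+1)| by
  descending induction on j. For j = 0 and k < n(q-1) the kernel is even a proper subset of
  C_1(k): pairing with a monomial x^a of complementary degree n(q-1) - k kills the kernel but
  not a suitable monomial word of C_1(k), because the power sums \<Sum>_t t^c over F_q vanish
  unless c is a positive multiple of q-1. As |C| = q^(dim C), the dimensions grow strictly.\<close>

section \<open>Power sums over a finite field\<close>

lemma of_nat_CARD_eq_0: "of_nat CARD('a) = (0::'a::{finite,field})"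
proof -
  have "(\<Sum>t\<in>UNIV. t + 1) = (\<Sum>t\<in>UNIV. (t::'a))"
    by (rule sum.reindex_bij_witness[where i="\<lambda>t. t - 1" and j="\<lambda>t. t + 1"]) auto
  then show ?thesis by (simp add: sum.distrib)
qed

lemma CARD_field_ge_2: "CARD('a::{finite,field}) \<ge> 2"
proof -
  have "card {0::'a, 1} \<le> CARD('a)" by (rule card_mono) auto
  then show ?thesis by simp
qed

lemma card_nonzero_field: "card (UNIV - {0::'a::{finite,field}}) = CARD('a) - 1"
  by (simp add: card_Diff_singleton)

lemma of_nat_card_nonzero_field: "of_nat (CARD('a::{finite,field}) - 1) = (-1::'a)"
  using CARD_field_ge_2[where 'a='a] by (simp add: of_nat_diff of_nat_CARD_eq_0)

lemma power_CARD_minus_1: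
  fixes x :: "'a::{finite,field}"
  assumes "x \<noteq> 0"
  shows "x ^ (CARD('a) - 1) = 1"
proof -
  let ?U = "UNIV - {0::'a}"
  have "(\<Prod>t\<in>?U. x * t) = (\<Prod>t\<in>?U. t)"
    by (rule prod.reindex_bij_witness[where i="\<lambda>t. t / x" and j="\<lambda>t. x * t"]) (use assms in auto)
  then have "x ^ card ?U * (\<Prod>t\<in>?U. t) = (\<Prod>t\<in>?U. t)"
    by (simp add: prod.distrib)
  then show ?thesis by (simp add: card_nonzero_field)
qed

lemma ex_power_ne_1:
  assumes "0 < r" "r < CARD('a::{finite,field}) - 1"
  shows "\<exists>g::'a. g \<noteq> 0 \<and> g ^ r \<noteq> 1"
proof (rule ccontr)
  assume no_witness: "\<not> ?thesis"
  define f :: "'a poly" where "f = monom 1 r + [:-1:]"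
  have roots: "UNIV - {0::'a} \<subseteq> {x. poly f x = 0}"
    using no_witness by (auto simp: f_def poly_monom)
  have deg: "degree f = r"
    using assms(1) by (simp add: f_def degree_add_eq_left degree_monom_eq)
  then have "f \<noteq> 0" using assms(1) by auto
  have "card (UNIV - {0::'a}) \<le> card {x. poly f x = 0}"
    using roots by (rule card_mono[rotated]) simp
  also have "\<dots> \<le> r" using card_poly_roots_bound[OF \<open>f \<noteq> 0\<close>] deg by simp
  finally show False using assms card_nonzero_field[where 'a='a] by simp
qed

lemma sum_UNIV_power:
  "(\<Sum>t\<in>(UNIV::'a::{finite,field} set). t ^ c) = (if 0 < c \<and> (CARD('a) - 1) dvd c then -1 else 0)"
proof (cases "c = 0")
  case True
  then show ?thesis by (simp add: of_nat_CARD_eq_0)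
next
  case c: False
  let ?m = "CARD('a) - 1"
  show ?thesis
  proof (cases "?m dvd c")
    case True
    then obtain s where s: "c = ?m * s" by blast
    have "t ^ c = (if t = 0 then 0 else 1)" for t :: 'a
      using c power_CARD_minus_1[of t] by (simp add: s power_mult)
    then have "(\<Sum>t\<in>(UNIV::'a set). t ^ c) = (\<Sum>t\<in>(UNIV::'a set). if t = 0 then 0 else 1)"
      by simp
    also have "\<dots> = of_nat (card (UNIV - {0::'a}))"
      by (simp add: sum.If_cases Compl_eq_Diff_UNIV)
    also have "\<dots> = -1" by (simp only: card_nonzero_field of_nat_card_nonzero_field)
    finally show ?thesis using True c by simp
  next
    case False
    have "0 < c mod ?m" "c mod ?m < ?m"
      using False CARD_field_ge_2[where 'a='a] by (auto simp: dvd_eq_mod_eq_0)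
    then obtain g :: 'a where g: "g \<noteq> 0" "g ^ (c mod ?m) \<noteq> 1"
      using ex_power_ne_1 by blast
    have "g ^ c = (g ^ ?m) ^ (c div ?m) * g ^ (c mod ?m)"
      unfolding power_mult[symmetric] power_add[symmetric] by simp
    then have "g ^ c \<noteq> 1" using g power_CARD_minus_1[OF g(1)] by simp
    \<comment> \<open>Substituting g t for t multiplies the sum by g^c \<noteq> 1.\<close>
    have "(\<Sum>t\<in>UNIV. (g * t) ^ c) = (\<Sum>t\<in>UNIV. t ^ c)"
      by (rule sum.reindex_bij_witness[where i="\<lambda>t. t / g" and j="\<lambda>t. g * t"]) (use g in auto)
    then have "g ^ c * (\<Sum>t\<in>UNIV. t ^ c) = (\<Sum>t\<in>UNIV. t ^ c)"
      by (simp add: power_mult_distrib sum_distrib_left)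
    then have "(g ^ c - 1) * (\<Sum>t\<in>UNIV. t ^ c) = 0"
      by (simp add: algebra_simps)
    then show ?thesis using \<open>g ^ c \<noteq> 1\<close> False by simp
  qed
qed

section \<open>Sums of monomials over affine and projective points\<close>

definition supported_on :: "nat set \<Rightarrow> (nat \<Rightarrow> 'a::zero) set" where
  "supported_on I = {x. \<forall>i. i \<notin> I \<longrightarrow> x i = 0}"

lemma finite_supported_on:
  assumes "finite I"
  shows "finite (supported_on I :: (nat \<Rightarrow> 'a::{finite,zero}) set)"
proof -
  have "supported_on I = {f::nat\<Rightarrow>'a. \<forall>x. (x \<in> I \<longrightarrow> f x \<in> UNIV) \<and> (x \<notin> I \<longrightarrow> f x = 0)}"
    by (auto simp: supported_on_def)
  then show ?thesis using finite_set_of_finite_funs[OF assms, of "UNIV::'a set" 0] by simp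
qed

lemma sum_supported_on_prod_power:
  fixes c :: "nat \<Rightarrow> nat"
  assumes "finite I"
  shows "(\<Sum>x\<in>(supported_on I::(nat\<Rightarrow>'a::{finite,field}) set). \<Prod>i\<in>I. x i ^ c i)
         = (\<Prod>i\<in>I. \<Sum>t\<in>(UNIV::'a set). t ^ c i)"
  using assms
proof (induction I rule: finite_induct)
  case empty
  have "supported_on {} = {(\<lambda>_. 0::'a)}" by (auto simp: supported_on_def)
  then show ?case by simp
next
  case (insert a I)
  let ?h = "\<lambda>(t::'a, x::nat\<Rightarrow>'a). x(a := t)"
  have bij: "bij_betw ?h (UNIV \<times> supported_on I) (supported_on (insert a I))"
    by (rule bij_betw_byWitness[where f'="\<lambda>y. (y a, y(a := 0))"])
       (use insert.hyps(2) in \<open>auto simp: supported_on_def fun_eq_iff\<close>)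
  have "(\<Sum>y\<in>supported_on (insert a I). \<Prod>i\<in>insert a I. y i ^ c i)
       = (\<Sum>z\<in>UNIV \<times> supported_on I. \<Prod>i\<in>insert a I. ?h z i ^ c i)"
    by (rule sum.reindex_bij_betw[OF bij, symmetric])
  also have "\<dots> = (\<Sum>(t, x)\<in>UNIV \<times> supported_on I. t ^ c a * (\<Prod>i\<in>I. x i ^ c i))"
  proof (intro sum.cong refl, clarify)
    fix t and x :: "nat \<Rightarrow> 'a"
    have "(\<Prod>i\<in>I. (x(a := t)) i ^ c i) = (\<Prod>i\<in>I. x i ^ c i)"
      using insert.hyps(2) by (intro prod.cong) auto
    then show "(\<Prod>i\<in>insert a I. (x(a := t)) i ^ c i) = t ^ c a * (\<Prod>i\<in>I. x i ^ c i)"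
      using insert.hyps by simp
  qed
  also have "\<dots> = (\<Sum>t\<in>UNIV. t ^ c a) * (\<Sum>x\<in>supported_on I. \<Prod>i\<in>I. x i ^ c i)"
    by (simp add: sum.cartesian_product[symmetric] sum_product)
  finally show ?case using insert by simp
qed

definition monom_val :: "nat \<Rightarrow> (nat \<Rightarrow> nat) \<Rightarrow> (nat \<Rightarrow> 'a::comm_semiring_1) \<Rightarrow> 'a" where
  "monom_val n e x = (\<Prod>i\<le>n. x i ^ e i)"

lemma monom_val_scale: "monom_val n e (\<lambda>i. l * x i) = l ^ (\<Sum>i\<le>n. e i) * monom_val n e x"
  by (simp add: monom_val_def power_mult_distrib prod.distrib power_sum)

lemma monom_val_mult: "monom_val n e x * monom_val n a x = monom_val n (\<lambda>i. e i + a i) x"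
  by (simp add: monom_val_def power_add prod.distrib)

lemma monom_val_zero: "i \<le> n \<Longrightarrow> 0 < e i \<Longrightarrow> monom_val n e 0 = 0"
  unfolding monom_val_def by (rule prod_zero) (auto intro!: bexI[of _ i] simp: zero_power)
lemma hom_poly_eval_monom_val: "hom_poly_eval n k c p = (\<Sum>e\<in>monomials_deg n k. c e * monom_val n e p)"
  by (simp add: hom_poly_eval_def monom_val_def)

definition points_from :: "nat \<Rightarrow> nat \<Rightarrow> (nat \<Rightarrow> 'a::field) set" where
  "points_from n j = {p \<in> proj_points n. \<forall>i<j. p i = 0}"

lemma points_from_0 [simp]: "points_from n 0 = proj_points n"
  by (simp add: points_from_def)

lemma points_from_antimono: "j \<le> j' \<Longrightarrow> points_from n j' \<subseteq> points_from n j"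
  by (auto simp: points_from_def)

lemma points_from_eq_empty: "n < j \<Longrightarrow> points_from n j = {}"
  by (auto simp: points_from_def proj_points_def)

lemma finite_points_from: "finite (points_from n j :: (nat \<Rightarrow> 'a::{finite,field}) set)"
proof -
  have "points_from n j \<subseteq> (supported_on {..n} :: (nat \<Rightarrow> 'a) set)"
    by (auto simp: points_from_def proj_points_def supported_on_def)
  then show ?thesis using finite_supported_on[of "{..n}"] finite_subset by auto
qed

lemma proj_points_Least_eq_1:
  assumes "p \<in> proj_points n"
  shows "(LEAST i. p i \<noteq> 0) \<le> n" and "p (LEAST i. p i \<noteq> 0) = 1"
proof -
  obtain j where j: "j \<le> n" "p j = 1" "\<forall>i<j. p i = 0"
    using assms by (auto simp: proj_points_def)
  then have "(LEAST i. p i \<noteq> 0) = j" by (intro Least_equality) (auto simp: not_less[symmetric])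
  then show "(LEAST i. p i \<noteq> 0) \<le> n" "p (LEAST i. p i \<noteq> 0) = 1" using j by simp_all
qed

lemma bij_betw_scale_points_from:
  "bij_betw (\<lambda>(l, p) i. l * p i) ((UNIV - {0}) \<times> points_from n j)
     (supported_on {j..n} - {0::nat \<Rightarrow> 'a::field})"
proof -
  let ?lead = "\<lambda>x::nat \<Rightarrow> 'a. x (LEAST i. x i \<noteq> 0)"
  have lead_ne_0: "?lead x \<noteq> 0" if x: "x \<noteq> 0" for x
  proof -
    obtain i where "x i \<noteq> 0" using x by (auto simp: fun_eq_iff)
    then show ?thesis by (rule LeastI)
  qed
  show ?thesis
  proof (rule bij_betw_byWitness[where f'="\<lambda>x. (?lead x, \<lambda>i. x i / ?lead x)"], goal_cases)
    case 1
    have "(?lead (\<lambda>i. l * p i), \<lambda>i. l * p i / ?lead (\<lambda>i. l * p i)) = (l, p)"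
      if "l \<noteq> 0" "p \<in> proj_points n" for l :: 'a and p
      using that proj_points_Least_eq_1(2)[OF that(2)] by simp
    then show ?case by (auto simp: points_from_def)
  next
    case 2
    then show ?case using lead_ne_0 by auto
  next
    case 3
    have "(\<lambda>i. l * p i) \<in> supported_on {j..n} - {0}"
      if "l \<noteq> 0" "p \<in> points_from n j" for l :: 'a and p
    proof -
      have "p (LEAST i. p i \<noteq> 0) = 1"
        using that(2) proj_points_Least_eq_1(2)[of p n] by (simp add: points_from_def)
      then have "(\<lambda>i. l * p i) \<noteq> 0"
        using that(1) by (auto simp: fun_eq_iff intro!: exI[of _ "LEAST i. p i \<noteq> 0"])
      then show ?thesis
        using that(2) by (auto simp: points_from_def proj_points_def supported_on_def not_le)
    qed
    then show ?case by auto
  next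
    case 4
    have "(?lead x, \<lambda>i. x i / ?lead x) \<in> (UNIV - {0}) \<times> points_from n j"
      if x: "x \<in> supported_on {j..n}" "x \<noteq> 0" for x
    proof -
      define s where "s = (LEAST i. x i \<noteq> 0)"
      have xs: "x s \<noteq> 0" using lead_ne_0 x(2) unfolding s_def by simp
      have below: "\<forall>i<s. x i = 0" unfolding s_def using not_less_Least by blast
      have "j \<le> s" "s \<le> n" using xs x(1) by (auto simp: supported_on_def)
      then show ?thesis
        unfolding s_def[symmetric] using xs below x(1)
        by (auto simp: points_from_def proj_points_def supported_on_def intro!: exI[of _ s])
    qed
    then show ?case by auto
  qed
qed

lemma sum_points_from_monom_val:
  fixes e :: "nat \<Rightarrow> nat"
  assumes deg: "(CARD('a::{finite,field}) - 1) dvd (\<Sum>i\<le>n. e i)" and "i \<le> n" "0 < e i"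
  shows "(\<Sum>p\<in>(points_from n j::(nat\<Rightarrow>'a) set). monom_val n e p)
    = - (\<Sum>x\<in>supported_on {j..n}. monom_val n e x)"
proof -
  let ?U = "UNIV - {0::'a}"
  let ?A = "supported_on {j..n} :: (nat \<Rightarrow> 'a) set"
  let ?P = "points_from n j :: (nat \<Rightarrow> 'a) set"
  have invariant: "monom_val n e (\<lambda>i. l * p i) = monom_val n e p" if "l \<noteq> 0" for l :: 'a and p
  proof -
    obtain s where "(\<Sum>i\<le>n. e i) = (CARD('a) - 1) * s" using deg by blast
    then show ?thesis using power_CARD_minus_1[OF that] by (simp add: monom_val_scale power_mult)
  qed
  have "finite ?A" by (simp add: finite_supported_on)
  moreover have "0 \<in> ?A" by (simp add: supported_on_def)
  moreover have "monom_val n e (0::nat \<Rightarrow> 'a) = 0" using assms(2,3) by (rule monom_val_zero)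
  ultimately have "(\<Sum>x\<in>?A. monom_val n e x) = (\<Sum>x\<in>?A - {0}. monom_val n e x)"
    by (simp add: sum.remove)
  also have "\<dots> = (\<Sum>z\<in>?U \<times> ?P. monom_val n e ((\<lambda>(l, p) i. l * p i) z))"
    by (rule sum.reindex_bij_betw[OF bij_betw_scale_points_from, symmetric])
  also have "\<dots> = (\<Sum>(l, p)\<in>?U \<times> ?P. monom_val n e p)"
  proof (rule sum.cong[OF refl])
    fix z assume "z \<in> ?U \<times> ?P"
    then obtain l p where "z = (l, p)" "l \<noteq> 0" by auto
    then show "monom_val n e ((\<lambda>(l, p) i. l * p i) z) = (\<lambda>(l, p). monom_val n e p) z"
      using invariant by simp
  qed
  also have "\<dots> = (\<Sum>l\<in>?U. \<Sum>p\<in>?P. monom_val n e p)"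
    by (rule sum.cartesian_product[symmetric])
  also have "\<dots> = - (\<Sum>p\<in>?P. monom_val n e p)"
    by (simp add: card_nonzero_field of_nat_CARD_eq_0)
  finally show ?thesis by simp
qed

lemma sum_proj_points_monom_val_eq_0:
  fixes e :: "nat \<Rightarrow> nat"
  assumes "1 \<le> n" and deg: "(\<Sum>i\<le>n. e i) = n * (CARD('a::{finite,field}) - 1)"
  shows "(\<Sum>p\<in>(proj_points n::(nat\<Rightarrow>'a) set). monom_val n e p) = 0"
proof -
  let ?m = "CARD('a) - 1"
  have "?m \<ge> 1" using CARD_field_ge_2[where 'a='a] by simp
  then have "(\<Sum>i\<le>n. e i) \<noteq> 0" using assms by simp
  then obtain i where i: "i \<le> n" "0 < e i" by (auto simp: sum_eq_0_iff)
  have prod_eq_0: "(\<Prod>i\<le>n. \<Sum>t\<in>(UNIV::'a set). t ^ e i) = 0"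
  proof (rule ccontr)
    assume "(\<Prod>i\<le>n. \<Sum>t\<in>(UNIV::'a set). t ^ e i) \<noteq> 0"
    then have "?m \<le> e i" if "i \<le> n" for i
      using that by (auto simp: sum_UNIV_power split: if_splits intro: dvd_imp_le)
    then have "(\<Sum>i\<le>n. ?m) \<le> (\<Sum>i\<le>n. e i)" by (intro sum_mono) auto
    then show False using deg \<open>?m \<ge> 1\<close> by simp
  qed
  have "(\<Sum>p\<in>(proj_points n::(nat\<Rightarrow>'a) set). monom_val n e p)
      = - (\<Sum>x\<in>supported_on {..n}. monom_val n e x)"
    using sum_points_from_monom_val[of e n i 0, where 'a='a] i deg by (simp add: atLeast0AtMost)
  also have "\<dots> = - (\<Prod>i\<le>n. \<Sum>t\<in>(UNIV::'a set). t ^ e i)"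
    by (simp add: monom_val_def sum_supported_on_prod_power)
  finally show ?thesis using prod_eq_0 by simp
qed

lemma sum_points_from_1_monom_val_ne_0:
  fixes e :: "nat \<Rightarrow> nat"
  assumes "1 \<le> n" and "e 0 = 0"
    and e: "\<And>i. 1 \<le> i \<Longrightarrow> i \<le> n \<Longrightarrow> e i = CARD('a::{finite,field}) - 1"
  shows "(\<Sum>p\<in>(points_from n 1::(nat\<Rightarrow>'a) set). monom_val n e p) \<noteq> 0"
proof -
  let ?m = "CARD('a) - 1"
  have "?m \<ge> 1" using CARD_field_ge_2[where 'a='a] by simp
  have mv: "monom_val n e x = (\<Prod>i\<in>{1..n}. x i ^ e i)" for x :: "nat \<Rightarrow> 'a"
    using \<open>e 0 = 0\<close> by (simp add: monom_val_def atMost_atLeast0 prod.atLeast_Suc_atMost)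
  have "(\<Sum>i\<le>n. e i) = n * ?m"
    using \<open>e 0 = 0\<close> e by (simp add: atMost_atLeast0 sum.atLeast_Suc_atMost)
  then have "(\<Sum>p\<in>(points_from n 1::(nat\<Rightarrow>'a) set). monom_val n e p)
      = - (\<Prod>i\<in>{1..n}. \<Sum>t\<in>(UNIV::'a set). t ^ e i)"
    using sum_points_from_monom_val[of e n n 1, where 'a='a] assms(1) e[of n] \<open>?m \<ge> 1\<close>
      sum_supported_on_prod_power[of "{1..n}" e]
    by (simp add: mv)
  also have "\<dots> = - (\<Prod>i\<in>{1..n}. (-1::'a))"
    using e \<open>?m \<ge> 1\<close> by (intro arg_cong[where f=uminus] prod.cong) (auto simp: sum_UNIV_power)
  finally show ?thesis by simp
qed

section \<open>Codes on the points with leading zero coordinates\<close>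

type_synonym 'a word = "(nat \<Rightarrow> 'a) \<Rightarrow> 'a"

definition restrict_from :: "nat \<Rightarrow> nat \<Rightarrow> 'a::field word \<Rightarrow> 'a word" where
  "restrict_from n j v = (\<lambda>p. if p \<in> points_from n j then v p else 0)"

definition code_from :: "nat \<Rightarrow> nat \<Rightarrow> nat \<Rightarrow> 'a::field word set" where
  "code_from n j k = range (\<lambda>c. restrict_from n j (hom_poly_eval n k c))"

definition mult_coord :: "nat \<Rightarrow> 'a::field word \<Rightarrow> 'a word" where
  "mult_coord j v = (\<lambda>p. p j * v p)"

lemma code_from_0: "code_from n 0 k = proj_RM_code n k"
  by (auto simp: code_from_def restrict_from_def proj_RM_code_def)

lemma restrict_from_restrict_from:
  "j \<le> j' \<Longrightarrow> restrict_from n j' (restrict_from n j v) = restrict_from n j' v"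
  using points_from_antimono[of j j' n] by (auto simp: restrict_from_def fun_eq_iff)

lemma restrict_from_image_code_from:
  "j \<le> j' \<Longrightarrow> restrict_from n j' ` code_from n j k = code_from n j' k"
  by (simp add: code_from_def image_image restrict_from_restrict_from)

lemma code_from_eq_zero: "n < j \<Longrightarrow> code_from n j k = {0}"
  by (auto simp: code_from_def restrict_from_def points_from_eq_empty fun_eq_iff)

lemma finite_code_from: "finite (code_from n j k :: 'a::{finite,field} word set)"
proof -
  let ?P = "points_from n j :: (nat \<Rightarrow> 'a) set"
  have "code_from n j k \<subseteq> {v. \<forall>p. (p \<in> ?P \<longrightarrow> v p \<in> UNIV) \<and> (p \<notin> ?P \<longrightarrow> v p = 0)}"
    by (auto simp: code_from_def restrict_from_def)
  moreover have "finite {v. \<forall>p. (p \<in> ?P \<longrightarrow> v p \<in> UNIV) \<and> (p \<notin> ?P \<longrightarrow> v p = (0::'a))}"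
    by (rule finite_set_of_finite_funs) (simp_all add: finite_points_from)
  ultimately show ?thesis by (rule finite_subset)
qed

lemma hom_poly_eval_lincomb:
  "hom_poly_eval n k (\<lambda>e. t * c e + d e) p = t * hom_poly_eval n k c p + hom_poly_eval n k d p"
  by (simp add: hom_poly_eval_def sum.distrib sum_distrib_left distrib_right mult.assoc)

interpretation VS: vector_space "\<lambda>(a::'a::field) (v::(nat\<Rightarrow>'a)\<Rightarrow>'a). (\<lambda>x. a * v x)"
  by unfold_locales (auto simp: fun_eq_iff algebra_simps)

lemma subspace_code_from: "VS.subspace (code_from n j k :: 'a::field word set)"
proof (rule VS.subspaceI)
  have "0 = restrict_from n j (hom_poly_eval n k (\<lambda>_. 0))"
    by (auto simp: restrict_from_def hom_poly_eval_def fun_eq_iff)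
  then show "0 \<in> code_from n j k" by (auto simp: code_from_def)
  have lincomb: "(\<lambda>x. t * v x) + w \<in> code_from n j k"
    if vw: "v \<in> code_from n j k" "w \<in> code_from n j k" for t :: 'a and v w
  proof -
    obtain c d where "v = restrict_from n j (hom_poly_eval n k c)" "w = restrict_from n j (hom_poly_eval n k d)"
      using vw by (auto simp: code_from_def)
    then have "(\<lambda>x. t * v x) + w = restrict_from n j (hom_poly_eval n k (\<lambda>e. t * c e + d e))"
      by (auto simp: restrict_from_def hom_poly_eval_lincomb fun_eq_iff)
    then show ?thesis by (auto simp: code_from_def)
  qed
  show "v + w \<in> code_from n j k" if "v \<in> code_from n j k" "w \<in> code_from n j k"
    for v w :: "'a word"
    using lincomb[OF that, of 1] by simp
  show "(\<lambda>x. t * v x) \<in> code_from n j k" if "v \<in> code_from n j k"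
    for t :: 'a and v :: "'a word"
    using lincomb[OF that \<open>0 \<in> code_from n j k\<close>, of t] by simp
qed

lemma sum_fun_upd_Suc:
  "j \<le> (n::nat) \<Longrightarrow> (\<Sum>i\<le>n. (e(j := Suc (e j))) i) = Suc (\<Sum>i\<le>n. e i)"
  by (simp add: sum.remove[of _ j] sum_Suc)

lemma monom_val_fun_upd_Suc:
  "j \<le> (n::nat) \<Longrightarrow> monom_val n (e(j := Suc (e j))) p = p j * monom_val n e p"
  by (simp add: monom_val_def prod.remove[of _ j] mult.assoc)

lemma finite_monomials_deg: "finite (monomials_deg n k)"
proof -
  have "e i \<le> k" if "e \<in> monomials_deg n k" "i \<le> n" for e i
    using that member_le_sum[of i "{..n}" e] by (auto simp: monomials_deg_def)
  then have "monomials_deg n k \<subseteq> {e. \<forall>i. (i \<in> {..n} \<longrightarrow> e i \<in> {..k}) \<and> (i \<notin> {..n} \<longrightarrow> e i = 0)}"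
    by (auto simp: monomials_deg_def)
  then show ?thesis by (rule finite_subset) (intro finite_set_of_finite_funs; simp)
qed

lemma hom_poly_eval_mult_coord:
  assumes "j \<le> n"
  shows "p j * hom_poly_eval n k c p
    = hom_poly_eval n (Suc k) (\<lambda>e. if 0 < e j then c (e(j := e j - 1)) else 0) p"
proof -
  have "hom_poly_eval n (Suc k) (\<lambda>e. if 0 < e j then c (e(j := e j - 1)) else 0) p
      = (\<Sum>e\<in>{e \<in> monomials_deg n (Suc k). 0 < e j}. c (e(j := e j - 1)) * monom_val n e p)"
    unfolding hom_poly_eval_monom_val sum.inter_filter[OF finite_monomials_deg] by (intro sum.cong) auto
  also have "\<dots> = (\<Sum>e\<in>monomials_deg n k. c e * monom_val n (e(j := Suc (e j))) p)"
  proof (rule sum.reindex_bij_witness[where j="\<lambda>e. e(j := e j - 1)" and i="\<lambda>e. e(j := Suc (e j))"],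
      goal_cases)
    case (1 e)
    then show ?case by simp
  next
    case (2 e)
    then have "e(j := e j - 1, j := Suc (e j - 1)) = e" by simp
    then show ?case
      using 2 assms sum_fun_upd_Suc[of j n "e(j := e j - 1)"] by (auto simp: monomials_deg_def)
  next
    case (3 e)
    then show ?case by simp
  next
    case (4 e)
    then show ?case using assms sum_fun_upd_Suc[of j n e] by (auto simp: monomials_deg_def)
  next
    case (5 e)
    then show ?case by simp
  qed
  also have "\<dots> = p j * hom_poly_eval n k c p"
    by (simp add: hom_poly_eval_monom_val monom_val_fun_upd_Suc[OF assms] sum_distrib_left mult.left_commute)
  finally show ?thesis by simp
qed

lemma mult_coord_code_from:
  assumes "j \<le> n" and "v \<in> code_from n j k"
  shows "mult_coord j v \<in> code_from n j (Suc k)"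
proof -
  obtain c where "v = restrict_from n j (hom_poly_eval n k c)"
    using assms(2) by (auto simp: code_from_def)
  then have "mult_coord j v
      = restrict_from n j (hom_poly_eval n (Suc k) (\<lambda>e. if 0 < e j then c (e(j := e j - 1)) else 0))"
    by (auto simp: mult_coord_def restrict_from_def fun_eq_iff hom_poly_eval_mult_coord[OF assms(1)])
  then show ?thesis by (auto simp: code_from_def)
qed

lemma restrict_from_Suc_mult_coord: "restrict_from n (Suc j) (mult_coord j v) = 0"
  by (auto simp: restrict_from_def mult_coord_def fun_eq_iff points_from_def)

lemma code_from_vanishes: "v \<in> code_from n j k \<Longrightarrow> p \<notin> points_from n j \<Longrightarrow> v p = 0"
  by (auto simp: code_from_def restrict_from_def)

lemma mult_coord_kernel_subset:
  "{v \<in> code_from n j k. mult_coord j v = 0} \<subseteq> (code_from n (Suc j) k :: 'a::field word set)"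
proof clarify
  fix v :: "'a word" assume v: "v \<in> code_from n j k" "mult_coord j v = 0"
  \<comment> \<open>v vanishes where x_j \<noteq> 0, so it is its own restriction to the points with x_j = 0.\<close>
  have "restrict_from n (Suc j) v = v"
  proof
    fix p
    have "v p = 0" if "p \<notin> points_from n (Suc j)"
    proof (cases "p \<in> points_from n j")
      case True
      then have "p j \<noteq> 0" using that by (auto simp: points_from_def less_Suc_eq)
      then show ?thesis using v(2) by (auto simp: mult_coord_def fun_eq_iff)
    qed (use v(1) code_from_vanishes in blast)
    then show "restrict_from n (Suc j) v p = v p" by (simp add: restrict_from_def)
  qed
  moreover obtain c where "v = restrict_from n j (hom_poly_eval n k c)"
    using v(1) by (auto simp: code_from_def)
  ultimately have "v = restrict_from n (Suc j) (hom_poly_eval n k c)"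
    by (simp add: restrict_from_restrict_from)
  then show "v \<in> code_from n (Suc j) k" by (simp add: code_from_def)
qed

section \<open>Counting codewords\<close>

lemma card_eq_card_kernel_mult_card_image:
  fixes f :: "'v::ab_group_add \<Rightarrow> 'w::ab_group_add"
  assumes "finite V" and diff_closed: "\<And>x y. x \<in> V \<Longrightarrow> y \<in> V \<Longrightarrow> x - y \<in> V"
    and additive: "\<And>x y. f (x - y) = f x - f y"
  shows "card V = card {v \<in> V. f v = 0} * card (f ` V)"
proof -
  let ?K = "{v \<in> V. f v = 0}"
  have fiber: "card {v \<in> V. f v = y} = card ?K" if y: "y \<in> f ` V" for y
  proof -
    obtain v0 where v0: "v0 \<in> V" "y = f v0" using y by auto
    have "bij_betw (\<lambda>u. v0 - u) ?K {v \<in> V. f v = y}"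
      by (rule bij_betw_byWitness[where f'="\<lambda>u. v0 - u"]) (use v0 diff_closed additive in auto)
    then show ?thesis by (simp add: bij_betw_same_card)
  qed
  have "card V = card (\<Union>y\<in>f ` V. {v \<in> V. f v = y})" by (rule arg_cong[where f=card]) auto
  also have "\<dots> = (\<Sum>y\<in>f ` V. card {v \<in> V. f v = y})"
    by (rule card_UN_disjoint) (use \<open>finite V\<close> in auto)
  also have "\<dots> = card ?K * card (f ` V)" using fiber by simp
  finally show ?thesis .
qed

lemma card_code_from_pos: "0 < card (code_from n j k :: 'a::{finite,field} word set)"
  using finite_code_from VS.subspace_0[OF subspace_code_from] card_gt_0_iff by blast

lemma card_code_from_step:
  assumes "j \<le> n"
  shows "card (code_from n j k :: 'a::{finite,field} word set) * card (code_from n (Suc j) (Suc k) :: 'a word set)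
    \<le> card {v \<in> code_from n j k :: 'a word set. mult_coord j v = 0} * card (code_from n j (Suc k) :: 'a word set)"
proof -
  let ?C = "\<lambda>j k. code_from n j k :: 'a word set"
  let ?Z = "{w \<in> ?C j (Suc k). restrict_from n (Suc j) w = 0}"
  have diff_closed: "v - w \<in> ?C j k'" if "v \<in> ?C j k'" "w \<in> ?C j k'" for v w k'
    using VS.subspace_diff[OF subspace_code_from that] .
  let ?K = "{v \<in> ?C j k. mult_coord j v = 0}"
  \<comment> \<open>The exact sequences 0 \<rightarrow> K \<rightarrow> C_j(k) \<rightarrow> Z (multiplication by x_j) and
    0 \<rightarrow> Z \<rightarrow> C_j(k+1) \<rightarrow> C_{j+1}(k+1) \<rightarrow> 0 (restriction).\<close>
  have kernel_mult: "card (?C j k) = card ?K * card (mult_coord j ` ?C j k)"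
    by (rule card_eq_card_kernel_mult_card_image)
       (auto simp: finite_code_from diff_closed mult_coord_def fun_eq_iff algebra_simps)
  have "finite ?Z" by (rule finite_subset[OF _ finite_code_from]) auto
  then have image_mult: "card (mult_coord j ` ?C j k) \<le> card ?Z"
    using mult_coord_code_from[OF assms] restrict_from_Suc_mult_coord by (intro card_mono) auto
  have "card (?C j (Suc k)) = card ?Z * card (restrict_from n (Suc j) ` ?C j (Suc k))"
    by (rule card_eq_card_kernel_mult_card_image)
       (auto simp: finite_code_from diff_closed restrict_from_def fun_eq_iff)
  then have kernel_restrict: "card (?C j (Suc k)) = card ?Z * card (?C (Suc j) (Suc k))"
    by (simp add: restrict_from_image_code_from)
  have "card (?C j k) * card (?C (Suc j) (Suc k)) \<le> card ?K * card ?Z * card (?C (Suc j) (Suc k))"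
    using kernel_mult image_mult by simp
  also have "\<dots> = card ?K * card (?C j (Suc k))"
    using kernel_restrict by (simp add: mult.assoc)
  finally show ?thesis .
qed

lemma card_code_from_mono:
  "card (code_from n j k :: 'a::{finite,field} word set) \<le> card (code_from n j (Suc k) :: 'a word set)"
proof (induction "Suc n - j" arbitrary: j k)
  case 0
  then show ?case by (simp add: code_from_eq_zero)
next
  case (Suc d)
  let ?C = "\<lambda>j k. code_from n j k :: 'a word set"
  have "j \<le> n" using Suc.hyps(2) by simp
  have "card {v \<in> ?C j k. mult_coord j v = 0} \<le> card (?C (Suc j) k)"
    by (rule card_mono[OF finite_code_from mult_coord_kernel_subset])
  also have "\<dots> \<le> card (?C (Suc j) (Suc k))" using Suc.hyps by (intro Suc.hyps(1)) simp
  finally have "card (?C j k) * card (?C (Suc j) (Suc k)) \<le> card (?C (Suc j) (Suc k)) * card (?C j (Suc k))"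
    using card_code_from_step[OF \<open>j \<le> n\<close>, where 'a='a, of k] mult_le_mono1 order_trans by blast
  then show ?case using card_code_from_pos[of n "Suc j" "Suc k", where 'a='a] by (simp add: mult.commute)
qed

section \<open>Strict growth for \<open>k < n(q-1)\<close>\<close>

lemma ex_bounded_exponents:
  "k \<le> n * m \<Longrightarrow> \<exists>b \<in> monomials_deg n k. b 0 = 0 \<and> (\<forall>i. b i \<le> m)"
proof (induction n arbitrary: k)
  case 0
  then show ?case by (intro bexI[of _ "\<lambda>_. 0"]) (auto simp: monomials_deg_def)
next
  case (Suc n)
  obtain b where b: "b \<in> monomials_deg n (min k (n * m))" "b 0 = 0" "\<forall>i. b i \<le> m"
    using Suc.IH[of "min k (n * m)"] by auto
  define b' where "b' = b(Suc n := k - n * m)"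
  have "(\<Sum>i\<le>n. b' i) = (\<Sum>i\<le>n. b i)" by (intro sum.cong) (auto simp: b'_def)
  then have "b' \<in> monomials_deg (Suc n) k"
    using b(1) by (auto simp: monomials_deg_def b'_def)
  moreover have "b' 0 = 0" "\<forall>i. b' i \<le> m" using b(2,3) Suc.prems by (auto simp: b'_def)
  ultimately show ?case by blast
qed

lemma hom_poly_eval_indicator:
  "b \<in> monomials_deg n k \<Longrightarrow> hom_poly_eval n k (\<lambda>e. if e = b then 1 else 0) p = monom_val n b p"
  by (simp add: hom_poly_eval_monom_val if_distrib[of "\<lambda>x. x * _"] finite_monomials_deg cong: if_cong)

lemma sum_code_from_0_mult_monom_val_eq_0:
  fixes v :: "'a::{finite,field} word"
  assumes "1 \<le> n" and "v \<in> code_from n 0 k" and deg: "(\<Sum>i\<le>n. a i) + k = n * (CARD('a) - 1)"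
  shows "(\<Sum>p\<in>proj_points n. v p * monom_val n a p) = 0"
proof -
  obtain c where "v = restrict_from n 0 (hom_poly_eval n k c)"
    using assms(2) by (auto simp: code_from_def)
  then have "(\<Sum>p\<in>proj_points n. v p * monom_val n a p)
      = (\<Sum>e\<in>monomials_deg n k. c e * (\<Sum>p\<in>proj_points n. monom_val n (\<lambda>i. e i + a i) p))"
    by (simp add: restrict_from_def hom_poly_eval_monom_val sum_distrib_left sum_distrib_right
        mult.assoc monom_val_mult sum.swap[of _ "proj_points n"])
  also have "\<dots> = 0"
  proof (intro sum.neutral ballI)
    fix e assume "e \<in> monomials_deg n k"
    then have "(\<Sum>i\<le>n. e i + a i) = n * (CARD('a) - 1)"
      using deg by (simp add: monomials_deg_def sum.distrib)
    then show "c e * (\<Sum>p\<in>proj_points n. monom_val n (\<lambda>i. e i + a i) p) = 0"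
      using sum_proj_points_monom_val_eq_0[where 'a='a, OF assms(1)] by simp
  qed
  finally show ?thesis .
qed

lemma card_mult_coord_kernel_less:
  assumes "1 \<le> n" and "k < n * (CARD('a::{finite,field}) - 1)"
  shows "card {v \<in> code_from n 0 k :: 'a word set. mult_coord 0 v = 0} < card (code_from n 1 k :: 'a word set)"
proof -
  let ?m = "CARD('a) - 1"
  let ?K = "{v \<in> code_from n 0 k :: 'a word set. mult_coord 0 v = 0}"
  obtain b where b: "b \<in> monomials_deg n k" "b 0 = 0" "\<forall>i. b i \<le> ?m"
    using ex_bounded_exponents[of k n ?m] assms(2) by auto
  \<comment> \<open>x^a complements x^b to (x_1 \<dots> x_n)^(q-1).\<close>
  define a where "a i = (if 1 \<le> i \<and> i \<le> n then ?m - b i else 0)" for i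
  have ab: "b i + a i = (if 1 \<le> i \<and> i \<le> n then ?m else 0)" for i
    using b(1,2) b(3)[rule_format, of i] by (cases "i = 0") (auto simp: a_def monomials_deg_def)
  have "(\<Sum>i\<le>n. a i) + k = n * ?m"
  proof -
    have "(\<Sum>i\<le>n. a i) + k = (\<Sum>i\<le>n. b i + a i)"
      using b(1) by (simp add: monomials_deg_def sum.distrib)
    also have "\<dots> = n * ?m"
      by (simp add: ab atMost_atLeast0 sum.atLeast_Suc_atMost)
    finally show ?thesis .
  qed
  define \<phi> where "\<phi> w = (\<Sum>p\<in>points_from n 1. w p * monom_val n a p)" for w :: "'a word"
  have kernel_vanishes: "\<phi> v = 0" if "v \<in> ?K" for v
  proof -
    have "v \<in> code_from n 1 k" using that mult_coord_kernel_subset[of n 0 k] by auto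
    then have "\<phi> v = (\<Sum>p\<in>proj_points n. v p * monom_val n a p)"
      unfolding \<phi>_def points_from_0[symmetric]
      by (intro sum.mono_neutral_left finite_points_from points_from_antimono) (auto dest: code_from_vanishes)
    also have "\<dots> = 0"
      using that sum_code_from_0_mult_monom_val_eq_0[OF assms(1) _ \<open>(\<Sum>i\<le>n. a i) + k = n * ?m\<close>]
      by simp
    finally show ?thesis .
  qed
  define w where "w = restrict_from n 1 (hom_poly_eval n k (\<lambda>e. if e = b then (1::'a) else 0))"
  have "\<phi> w = (\<Sum>p\<in>points_from n 1. monom_val n (\<lambda>i. b i + a i) p)"
    unfolding \<phi>_def w_def restrict_from_def
    by (simp add: hom_poly_eval_indicator[OF b(1)] monom_val_mult)
  also have "\<dots> \<noteq> 0"
    by (rule sum_points_from_1_monom_val_ne_0[OF assms(1)]) (simp_all add: ab)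
  finally have "w \<notin> ?K" using kernel_vanishes by blast
  moreover have "w \<in> code_from n 1 k" by (auto simp: w_def code_from_def)
  ultimately have "?K \<subset> code_from n 1 k" using mult_coord_kernel_subset[of n 0 k] by auto
  then show ?thesis by (rule psubset_card_mono[OF finite_code_from])
qed

lemma card_proj_RM_code_less:
  assumes "1 \<le> n" and "k < n * (CARD('a::{finite,field}) - 1)"
  shows "card (proj_RM_code n k :: 'a word set) < card (proj_RM_code n (Suc k) :: 'a word set)"
proof -
  let ?C = "\<lambda>j k. code_from n j k :: 'a word set"
  have "card (?C 0 k) * card (?C 1 (Suc k))
      \<le> card {v \<in> ?C 0 k. mult_coord 0 v = 0} * card (?C 0 (Suc k))"
    using card_code_from_step[of 0 n] by simp
  also have "\<dots> < card (?C 1 k) * card (?C 0 (Suc k))"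
    using card_mult_coord_kernel_less[OF assms] card_code_from_pos by simp
  also have "\<dots> \<le> card (?C 1 (Suc k)) * card (?C 0 (Suc k))"
    using card_code_from_mono[where 'a='a] by simp
  finally show ?thesis by (simp add: code_from_0 mult.commute)
qed

section \<open>Cardinality and dimension\<close>

lemma (in vector_space) card_span_independent:
  assumes "finite (UNIV :: 'a set)" and "finite B" and "independent B"
  shows "card (span B) = CARD('a) ^ card B"
  using assms(2,3)
proof (induction B rule: finite_induct)
  case empty
  then show ?case by simp
next
  case (insert a B)
  have "independent B" and a: "a \<notin> span B"
    using insert.prems insert.hyps(2) by (auto simp: independent_insert)
  have "bij_betw (\<lambda>(t, v). t *s a + v) (UNIV \<times> span B) (span (insert a B))"
  proof (rule bij_betwI')
    fix z z' :: "'a \<times> 'b" assume z: "z \<in> UNIV \<times> span B" "z' \<in> UNIV \<times> span B"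
    obtain t v t' v' where zz: "z = (t, v)" "z' = (t', v')" by fastforce
    have "v' - v \<in> span B" using z zz by (simp add: span_diff)
    moreover have "t *s a + v = t' *s a + v' \<longleftrightarrow> (t - t') *s a = v' - v"
      by (auto simp: scale_left_diff_distrib algebra_simps)
    moreover have "(t - t') *s a \<notin> span B" if "t \<noteq> t'"
      using span_scale[of "(t - t') *s a" B "inverse (t - t')"] a that by auto
    ultimately show "((\<lambda>(t, v). t *s a + v) z = (\<lambda>(t, v). t *s a + v) z') = (z = z')"
      unfolding zz by (cases "t = t'") auto
  next
    fix z :: "'a \<times> 'b" assume "z \<in> UNIV \<times> span B"
    then obtain t v where "z = (t, v)" "v \<in> span B" by auto
    then show "(\<lambda>(t, v). t *s a + v) z \<in> span (insert a B)"
      unfolding span_insert by (intro CollectI exI[of _ t]) simp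
  next
    fix y assume "y \<in> span (insert a B)"
    then obtain t where "y - t *s a \<in> span B" by (auto simp: span_insert)
    then show "\<exists>z \<in> UNIV \<times> span B. y = (\<lambda>(t, v). t *s a + v) z"
      by (intro bexI[of _ "(t, y - t *s a)"]) auto
  qed
  then have "card (span (insert a B)) = CARD('a) * card (span B)"
    by (simp add: bij_betw_same_card[symmetric] card_cartesian_product)
  then show ?case using insert \<open>independent B\<close> by simp
qed

lemma (in vector_space) card_eq_CARD_power_dim:
  assumes "finite (UNIV :: 'a set)" and "finite C" and "subspace C"
  shows "card C = CARD('a) ^ dim C"
proof -
  obtain B where B: "B \<subseteq> C" "independent B" "C \<subseteq> span B" "card B = dim C"
    by (rule basis_exists)
  then have "span B = C" using span_subspace assms(3) by blast
  then show ?thesis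
    using card_span_independent[OF assms(1) finite_subset[OF B(1) assms(2)] B(2)] B(4) by simp
qed

theorem mainTheorem1:
  fixes n k :: nat
  assumes "n \<ge> 1" and "1 \<le> k" and "k < n * (card (UNIV :: 'a::{finite,field} set) - 1)"
  shows "code_dim (proj_RM_code n k :: ((nat \<Rightarrow> 'a) \<Rightarrow> 'a) set)
           < code_dim (proj_RM_code n (k + 1) :: ((nat \<Rightarrow> 'a) \<Rightarrow> 'a) set)"
proof -
  have card_code: "card (proj_RM_code n k :: 'a word set)
      = CARD('a) ^ code_dim (proj_RM_code n k :: 'a word set)" for k
    unfolding code_dim_def code_from_0[symmetric]
    using VS.card_eq_CARD_power_dim[OF finite_class.finite_UNIV finite_code_from subspace_code_from] .
  have "CARD('a) ^ code_dim (proj_RM_code n k :: 'a word set)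
      < CARD('a) ^ code_dim (proj_RM_code n (Suc k) :: 'a word set)"
    using card_proj_RM_code_less[OF assms(1,3)] unfolding card_code .
  then show ?thesis using CARD_field_ge_2[where 'a='a] by simp
qed

end
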